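(* Let $n\geq 2$ be an integer and $b:=-n+i$. If $s$ is a neighbour of $T_n$, then $bs+\delta$ is a neighbour of $T_n$ for some $\delta\in\{0,\pm1,\ldots,\pm n^2\}$.
   Context: $T_n$ is the attractor of the iterated function system $\{z\mapsto b^{-1}(z+d): d\in\{0,1,\ldots,n^2\}\}$, i.e. $T_n=\{\sum_{j\ge1}d_jb^{-j}: d_j\in\{0,\ldots,n^2\}\}$. For $Y\subset\mathbb{C}$, a neighbour of $Y$ is a Gaussian integer $s$ with $Y\cap(Y+s)\neq\emptyset$. *)

theory Defs
  imports Complex_Main
begin

definition base :: "nat \<Rightarrow> complex" where
  "base n = - of_nat n + \<i>"

text \<open>T_n = { sum_{j>=1} d_j b^(-j) : d_j in {0,...,n^2} }; the sequence d is indexed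
  from 0, so d j plays the role of d_(j+1).\<close>
definition T :: "nat \<Rightarrow> complex set" where
  "T n = {z. \<exists>d :: nat \<Rightarrow> nat. (\<forall>j. d j \<le> n\<^sup>2) \<and>
              (\<lambda>j. of_nat (d j) / base n ^ Suc j) sums z}"

definition gauss_int :: "complex \<Rightarrow> bool" where
  "gauss_int z \<longleftrightarrow> Re z \<in> \<int> \<and> Im z \<in> \<int>"

definition neighbour :: "complex set \<Rightarrow> complex \<Rightarrow> bool" where
  "neighbour Y s \<longleftrightarrow> gauss_int s \<and> Y \<inter> ((\<lambda>z. z + s) ` Y) \<noteq> {}"

end

theory Submission
  imports Defs
begin

text \<open>Multiplying a point of T n by b drops its leading digit, landing in T n + k for some
  digit k; writing two points y and y + s of T n this way shows that the Gaussian integer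
  b s + (l - k) is the difference of two points of T n.\<close>

lemma base_nonzero: "base n \<noteq> 0"
proof
  assume "base n = 0"
  then have "Im (base n) = 0" by simp
  then show False by (simp add: base_def)
qed

lemma sums_digits_shift:
  fixes b :: "'a :: real_normed_field"
  assumes "b \<noteq> 0" and "(\<lambda>j. of_nat (d j) / b ^ Suc j) sums z"
  shows "(\<lambda>j. of_nat (d (Suc j)) / b ^ Suc j) sums (b * z - of_nat (d 0))"
proof -
  have "(\<lambda>j. b * (of_nat (d j) / b ^ Suc j)) sums (b * z)"
    using sums_mult[OF assms(2)] .
  moreover have "b * (of_nat (d j) / b ^ Suc j) = of_nat (d j) / b ^ j" for j
    using \<open>b \<noteq> 0\<close> by (simp add: field_simps)
  ultimately have "(\<lambda>j. of_nat (d j) / b ^ j) sums (b * z)" by simp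
  then show ?thesis
    using sums_Suc_iff[where f = "\<lambda>j. of_nat (d j) / b ^ j"] by simp
qed

lemma base_mult_T_minus_digit:
  assumes "z \<in> T n"
  obtains k :: nat where "k \<le> n\<^sup>2" and "base n * z - of_nat k \<in> T n"
proof -
  obtain d where d: "\<forall>j. d j \<le> n\<^sup>2" "(\<lambda>j. of_nat (d j) / base n ^ Suc j) sums z"
    using assms unfolding T_def by blast
  have "base n * z - of_nat (d 0) \<in> T n"
    unfolding T_def using d sums_digits_shift[OF base_nonzero d(2)]
    by (intro CollectI exI[of _ "\<lambda>j. d (Suc j)"]) auto
  with d(1) that show ?thesis by blast
qed

lemma gauss_int_add: "gauss_int z \<Longrightarrow> gauss_int w \<Longrightarrow> gauss_int (z + w)"
  by (simp add: gauss_int_def)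

lemma gauss_int_mult: "gauss_int z \<Longrightarrow> gauss_int w \<Longrightarrow> gauss_int (z * w)"
  by (simp add: gauss_int_def Ints_diff Ints_mult Ints_add)

lemma gauss_int_of_int: "gauss_int (of_int k)"
  by (simp add: gauss_int_def)

lemma gauss_int_base: "gauss_int (base n)"
  by (simp add: gauss_int_def base_def)

lemma neighbour_iff: "neighbour Y s \<longleftrightarrow> gauss_int s \<and> (\<exists>y\<in>Y. y + s \<in> Y)"
  unfolding neighbour_def by blast

theorem lemma3p6:
  fixes n :: nat and s :: complex
  assumes "n \<ge> 2"
    and "neighbour (T n) s"
  shows "\<exists>\<delta> :: int. \<bar>\<delta>\<bar> \<le> int (n\<^sup>2) \<and> neighbour (T n) (base n * s + of_int \<delta>)"
proof -
  obtain y where "gauss_int s" and y: "y \<in> T n" and ys: "y + s \<in> T n"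
    using assms(2) by (auto simp: neighbour_iff)
  obtain l where l: "l \<le> n\<^sup>2" "base n * y - of_nat l \<in> T n"
    using base_mult_T_minus_digit[OF y] .
  obtain k where k: "k \<le> n\<^sup>2" "base n * (y + s) - of_nat k \<in> T n"
    using base_mult_T_minus_digit[OF ys] .
  define \<delta> where "\<delta> = int l - int k"
  have "base n * (y + s) - of_nat k = (base n * y - of_nat l) + (base n * s + of_int \<delta>)"
    unfolding \<delta>_def by (simp add: algebra_simps)
  moreover have "gauss_int (base n * s + of_int \<delta>)"
    by (intro gauss_int_add gauss_int_mult gauss_int_base gauss_int_of_int \<open>gauss_int s\<close>)
  ultimately have "neighbour (T n) (base n * s + of_int \<delta>)"
    using k(2) l(2) unfolding neighbour_iff by metis
  moreover have "\<bar>\<delta>\<bar> \<le> int (n\<^sup>2)"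
    unfolding \<delta>_def using k(1) l(1) by linarith
  ultimately show ?thesis by blast
qed

end
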